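(* Let $f:X\to X$, $X=[c_0,c_N]$, satisfy properties P1–P6 (with slope $\lambda\in(0,1)$), let $\{\xi_r\}_{r\in\mathbb{N}}$ be a well-cutting orbit of $f$, and define $\phi:[c_0,c_N]\to\mathbb{R}$ by $\phi(x)=x+\sum_{n\in\mathcal{N}(x)}\lambda^n$, where $\mathcal{N}(x):=\{n\geqslant1:\xi_n<x\}$. Then $\phi$ is strictly increasing, left-continuous on $[c_0,c_N]$, continuous on $[c_0,c_N]\setminus\{\xi_r\}_{r\geqslant1}$, and $\lim_{x\searrow\xi_r}\phi(x)=\phi(\xi_r)+\lambda^r$ for all $r\geqslant 1$. Moreover, \[ \phi([c_0,c_N])=[\phi(c_0),\phi(c_N)]\setminus\bigcup_{r=1}^\infty G_r,\qquad G_r:=(\phi(\xi_r),\phi(\xi_r)+\lambda^r]\ (r\geqslant 1), \] and $\overline{G_r}\cap\overline{G_l}=\emptyset$ for all $r\neq l$.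
   Context: Setting: $N\geqslant 2$, $c_0<c_1<\dots<c_N$, $X=[c_0,c_N]$, $X_1=[c_0,c_1)$, $X_i=(c_{i-1},c_i)$ for $1<i<N$, $X_N=(c_{N-1},c_N]$; $\Delta:=\{c_1,\dots,c_{N-1}\}$; $f_i$ is the continuous extension of $f|_{X_i}$ to $\overline{X_i}$; $\widetilde X:=\bigcap_{n\geqslant0}f^{-n}(X\setminus\Delta)$. Atoms: $F_i(A):=\overline{f(A\cap X_i)}$, $A_{i_1\dots i_n}:=F_{i_n}\circ\dots\circ F_{i_1}(X)$ is an atom of generation $n$ if non-empty, $\mathcal{A}_n$ their set, $\mathcal{A}_n(x):=\{A\in\mathcal{A}_n:\exists t\in\mathbb{N},f^{t+n}(x)\in A\}$; attractor $\Lambda:=\bigcap_{n\geqslant1}\bigcup_{A\in\mathcal{A}_n}A$. $\Delta_{lr}(x)$ is the set of $c_i\in\Delta$ such that for every $n\geqslant1$ there is $A\in\mathcal{A}_n(x)$ with $c_i\in A$, $f^{t+n}(x)\in A\cap X_i$ and $f^{t'+n}(x)\in A\cap X_{i+1}$ for some $t,t'\in\mathbb{N}$. P1: $f$ is discontinuous at every point of $\Delta$, and $f|_{X_i}$ is affine with slope $\lambda\in(0,1)$ for every $i$. P2 (separation): each $f_i$ injective and $f_i(\overline{X_i})\cap f_j(\overline{X_j})=\emptyset$ for $i\neq j$. P3: $\Lambda$ is a Cantor set. P4: $\bigcup_{i=1}^{N-1}\{f_i(c_i),f_{i+1}(c_i)\}\subset\widetilde X$. P5: for some $i$, $\{f^n(f_i(c_i))\}_n$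 or $\{f^n(f_{i+1}(c_i))\}_n$ is dense in $\Lambda$. P6: $c_i\in\Delta_{lr}(x)$ for all $x\in\widetilde X$ and all $i\in\{1,\dots,N-1\}$. A well-cutting orbit of $f$ is an orbit $\{\xi_r\}_{r\in\mathbb{N}}$, $\xi_r=f^r(\xi_0)$, with $\xi_0\in\Lambda\cap\widetilde X$, containing no point of: (1) the boundary points of the gaps of the Cantor set $\Lambda$; (2) the forward orbits of $c_0$ and $c_N$; (3) the forward orbits of $f_i(c_i)$ and $f_{i+1}(c_i)$ for $i\in\{1,\dots,N-1\}$. *)

theory Defs
  imports "HOL-Analysis.Analysis"
begin

text \<open>Partition points are c 0 < c 1 < ... < c N; all notions are parametrised by N and c.\<close>

definition XX :: "(nat \<Rightarrow> real) \<Rightarrow> nat \<Rightarrow> real set" where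
  "XX c N = {c 0 .. c N}"

definition Xi :: "nat \<Rightarrow> (nat \<Rightarrow> real) \<Rightarrow> nat \<Rightarrow> real set" where
  "Xi N c i = (if i = 1 then {c 0 ..< c 1}
               else if i = N then {c (N - 1) <.. c N}
               else {c (i - 1) <..< c i})"

definition Delta :: "nat \<Rightarrow> (nat \<Rightarrow> real) \<Rightarrow> real set" where
  "Delta N c = c ` {1 .. N - 1}"

text \<open>f_i: the continuous extension of f restricted to X_i to the closure of X_i.\<close>
definition fext :: "nat \<Rightarrow> (nat \<Rightarrow> real) \<Rightarrow> (real \<Rightarrow> real) \<Rightarrow> nat \<Rightarrow> real \<Rightarrow> real" where
  "fext N c f i x = (if x \<in> Xi N c i then f x else Lim (at x within Xi N c i) f)"

definition Xtilde :: "nat \<Rightarrow> (nat \<Rightarrow> real) \<Rightarrow> (real \<Rightarrow> real) \<Rightarrow> real set" where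
  "Xtilde N c f = {x \<in> XX c N. \<forall>n. (f ^^ n) x \<in> XX c N - Delta N c}"

definition FF :: "nat \<Rightarrow> (nat \<Rightarrow> real) \<Rightarrow> (real \<Rightarrow> real) \<Rightarrow> nat \<Rightarrow> real set \<Rightarrow> real set" where
  "FF N c f i A = closure (f ` (A \<inter> Xi N c i))"

text \<open>Atom A_{i1...in} = F_in o ... o F_i1 (X).\<close>
definition atom :: "nat \<Rightarrow> (nat \<Rightarrow> real) \<Rightarrow> (real \<Rightarrow> real) \<Rightarrow> nat list \<Rightarrow> real set" where
  "atom N c f is = fold (\<lambda>i A. FF N c f i A) is (XX c N)"

definition atoms :: "nat \<Rightarrow> (nat \<Rightarrow> real) \<Rightarrow> (real \<Rightarrow> real) \<Rightarrow> nat \<Rightarrow> real set set" where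
  "atoms N c f n = {A. \<exists>is. length is = n \<and> set is \<subseteq> {1..N} \<and> A = atom N c f is \<and> A \<noteq> {}}"

definition atoms_of :: "nat \<Rightarrow> (nat \<Rightarrow> real) \<Rightarrow> (real \<Rightarrow> real) \<Rightarrow> nat \<Rightarrow> real \<Rightarrow> real set set" where
  "atoms_of N c f n x = {A \<in> atoms N c f n. \<exists>t. (f ^^ (t + n)) x \<in> A}"

definition attractor :: "nat \<Rightarrow> (nat \<Rightarrow> real) \<Rightarrow> (real \<Rightarrow> real) \<Rightarrow> real set" where
  "attractor N c f = (\<Inter>n\<in>{1..}. \<Union>(atoms N c f n))"

definition Delta_lr :: "nat \<Rightarrow> (nat \<Rightarrow> real) \<Rightarrow> (real \<Rightarrow> real) \<Rightarrow> real \<Rightarrow> real set" where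
  "Delta_lr N c f x = {c i | i. i \<in> {1 .. N - 1} \<and>
     (\<forall>n\<ge>1. \<exists>A \<in> atoms_of N c f n x. c i \<in> A
        \<and> (\<exists>t. (f ^^ (t + n)) x \<in> A \<inter> Xi N c i)
        \<and> (\<exists>t'. (f ^^ (t' + n)) x \<in> A \<inter> Xi N c (i + 1)))}"

definition cantor_set :: "real set \<Rightarrow> bool" where
  "cantor_set S \<longleftrightarrow> S \<noteq> {} \<and> compact S \<and> (\<forall>x\<in>S. x islimpt S)
     \<and> (\<forall>x\<in>S. connected_component_set S x = {x})"

definition P1 :: "nat \<Rightarrow> (nat \<Rightarrow> real) \<Rightarrow> (real \<Rightarrow> real) \<Rightarrow> real \<Rightarrow> bool" where
  "P1 N c f lam \<longleftrightarrow> 0 < lam \<and> lam < 1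
     \<and> (\<forall>x\<in>Delta N c. \<not> continuous (at x within XX c N) f)
     \<and> (\<forall>i\<in>{1..N}. \<exists>b. \<forall>x\<in>Xi N c i. f x = lam * x + b)"

definition P2 :: "nat \<Rightarrow> (nat \<Rightarrow> real) \<Rightarrow> (real \<Rightarrow> real) \<Rightarrow> bool" where
  "P2 N c f \<longleftrightarrow> (\<forall>i\<in>{1..N}. inj_on (fext N c f i) (closure (Xi N c i)))
     \<and> (\<forall>i\<in>{1..N}. \<forall>j\<in>{1..N}. i \<noteq> j \<longrightarrow>
          fext N c f i ` closure (Xi N c i) \<inter> fext N c f j ` closure (Xi N c j) = {})"

definition P3 :: "nat \<Rightarrow> (nat \<Rightarrow> real) \<Rightarrow> (real \<Rightarrow> real) \<Rightarrow> bool" where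
  "P3 N c f \<longleftrightarrow> cantor_set (attractor N c f)"

definition P4 :: "nat \<Rightarrow> (nat \<Rightarrow> real) \<Rightarrow> (real \<Rightarrow> real) \<Rightarrow> bool" where
  "P4 N c f \<longleftrightarrow> (\<forall>i\<in>{1 .. N - 1}. fext N c f i (c i) \<in> Xtilde N c f
                                    \<and> fext N c f (i + 1) (c i) \<in> Xtilde N c f)"

definition P5 :: "nat \<Rightarrow> (nat \<Rightarrow> real) \<Rightarrow> (real \<Rightarrow> real) \<Rightarrow> bool" where
  "P5 N c f \<longleftrightarrow> (\<exists>i\<in>{1 .. N - 1}.
      attractor N c f \<subseteq> closure (range (\<lambda>n. (f ^^ n) (fext N c f i (c i))))
    \<or> attractor N c f \<subseteq> closure (range (\<lambda>n. (f ^^ n) (fext N c f (i + 1) (c i)))))"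

definition P6 :: "nat \<Rightarrow> (nat \<Rightarrow> real) \<Rightarrow> (real \<Rightarrow> real) \<Rightarrow> bool" where
  "P6 N c f \<longleftrightarrow> (\<forall>x\<in>Xtilde N c f. \<forall>i\<in>{1 .. N - 1}. c i \<in> Delta_lr N c f x)"

text \<open>Boundary points of the gaps (bounded complementary intervals) of S.\<close>
definition gap_bdry :: "real set \<Rightarrow> real set" where
  "gap_bdry S = {x \<in> S. \<exists>y\<in>S. y \<noteq> x \<and> {min x y <..< max x y} \<inter> S = {}}"

definition fwd_orbit :: "(real \<Rightarrow> real) \<Rightarrow> real \<Rightarrow> real set" where
  "fwd_orbit f y = range (\<lambda>n. (f ^^ n) y)"

definition well_cutting :: "nat \<Rightarrow> (nat \<Rightarrow> real) \<Rightarrow> (real \<Rightarrow> real) \<Rightarrow> (nat \<Rightarrow> real) \<Rightarrow> bool" where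
  "well_cutting N c f \<xi> \<longleftrightarrow>
     (\<forall>r. \<xi> r = (f ^^ r) (\<xi> 0))
     \<and> \<xi> 0 \<in> attractor N c f \<inter> Xtilde N c f
     \<and> (\<forall>r. \<xi> r \<notin> gap_bdry (attractor N c f)
           \<and> \<xi> r \<notin> fwd_orbit f (c 0) \<and> \<xi> r \<notin> fwd_orbit f (c N)
           \<and> (\<forall>i\<in>{1 .. N - 1}. \<xi> r \<notin> fwd_orbit f (fext N c f i (c i))
                               \<and> \<xi> r \<notin> fwd_orbit f (fext N c f (i + 1) (c i))))"

definition wc_phi :: "real \<Rightarrow> (nat \<Rightarrow> real) \<Rightarrow> real \<Rightarrow> real" where
  "wc_phi lam \<xi> x = x + (\<Sum>n. if 1 \<le> n \<and> \<xi> n < x then lam ^ n else 0)"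

end

theory Submission
  imports Defs
begin

text \<open>
  \<open>\<phi>\<close> adds to \<open>x\<close> the weight \<open>\<lambda>\<^sup>n\<close> of every orbit point \<open>\<xi>\<^sub>n < x\<close>, so it is strictly
  increasing, left-continuous, and jumps at \<open>x\<close> by the total weight of the indices \<open>n\<close> with
  \<open>\<xi>\<^sub>n = x\<close>. A strictly increasing left-continuous function maps \<open>[a,b]\<close> onto
  \<open>[\<phi> a, \<phi> b]\<close> minus its jump intervals, and these have pairwise disjoint closures.
  The only dynamical input is that a well-cutting orbit is injective, so that the jump at
  \<open>\<xi>\<^sub>r\<close> is exactly \<open>\<lambda>\<^sup>r\<close>. Were it eventually periodic, its finitely many points would avoid
  the discontinuities of \<open>f\<close>, where \<open>f\<close> is an affine contraction; every orbit entering a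
  small neighbourhood of \<open>\<xi>\<^sub>0\<close> then accumulates only on this finite set. By P5 some orbit is
  dense in the attractor and, as \<open>\<xi>\<^sub>0\<close> lies in the attractor, enters that neighbourhood;
  hence the perfect nonempty attractor would be contained in a finite set.
\<close>

definition geom_weight :: "real \<Rightarrow> nat set \<Rightarrow> real" where
  "geom_weight lam A = (\<Sum>n. if n \<in> A then lam ^ n else 0)"

lemma geom_weight_singleton: "geom_weight lam {r} = lam ^ r"
  unfolding geom_weight_def using sums_single[of r "\<lambda>n. lam ^ n"] by (simp add: sums_iff)

lemma geom_weight_empty: "geom_weight lam {} = 0"
  by (simp add: geom_weight_def)

lemma geom_weight_index_of_inj:
  assumes "inj \<xi>" "1 \<le> r"
  shows "geom_weight lam {n. 1 \<le> n \<and> \<xi> n = \<xi> r} = lam ^ r"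
proof -
  have "{n. 1 \<le> n \<and> \<xi> n = \<xi> r} = {r}"
    using assms by (auto simp: inj_eq)
  then show ?thesis
    by (simp add: geom_weight_singleton)
qed

lemma geom_weight_index_off_range:
  assumes "x \<notin> \<xi> ` {1..}"
  shows "geom_weight lam {n. 1 \<le> n \<and> \<xi> n = x} = 0"
proof -
  have "{n. 1 \<le> n \<and> \<xi> n = x} = {}"
    using assms by auto
  then show ?thesis
    by (simp only: geom_weight_empty)
qed

context
  fixes lam :: real
  assumes lam: "0 \<le> lam" "lam < 1"
begin

lemma summable_geom_weight: "summable (\<lambda>n. if n \<in> A then lam ^ n else 0)"
  by (rule summable_comparison_test[of _ "\<lambda>n. lam ^ n"])
    (use lam in \<open>auto intro!: summable_geometric exI[of _ 0]\<close>)

lemma geom_weight_nonneg: "0 \<le> geom_weight lam A"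
  unfolding geom_weight_def by (rule suminf_nonneg[OF summable_geom_weight]) (use lam in auto)

lemma geom_weight_mono: "A \<subseteq> B \<Longrightarrow> geom_weight lam A \<le> geom_weight lam B"
  unfolding geom_weight_def
  by (rule suminf_le[OF _ summable_geom_weight summable_geom_weight]) (use lam in auto)

lemma geom_weight_Un_disjoint:
  assumes "A \<inter> B = {}"
  shows "geom_weight lam (A \<union> B) = geom_weight lam A + geom_weight lam B"
proof -
  have "geom_weight lam A + geom_weight lam B
      = (\<Sum>n. (if n \<in> A then lam ^ n else 0) + (if n \<in> B then lam ^ n else 0))"
    unfolding geom_weight_def by (rule suminf_add[OF summable_geom_weight summable_geom_weight])
  also have "\<dots> = geom_weight lam (A \<union> B)"
    unfolding geom_weight_def by (rule suminf_cong) (use assms in auto)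
  finally show ?thesis by simp
qed

lemma geom_weight_atLeast: "geom_weight lam {M..} = lam ^ M / (1 - lam)"
proof -
  have "(\<lambda>i. lam ^ M * lam ^ i) sums (lam ^ M * (1 / (1 - lam)))"
    by (rule sums_mult[OF geometric_sums]) (use lam in auto)
  then have "(\<lambda>i. (\<lambda>n. if n \<in> {M..} then lam ^ n else 0) (i + M)) sums
      (lam ^ M / (1 - lam) + (\<Sum>i<M. if i \<in> {M..} then lam ^ i else 0))"
    by (simp add: power_add mult.commute)
  then show ?thesis
    unfolding geom_weight_def by (subst (asm) sums_iff_shift) (simp add: sums_iff)
qed

lemma tendsto_geom_weight_zero:
  assumes "\<And>n. eventually (\<lambda>y. n \<notin> A y) F"
  shows "((\<lambda>y. geom_weight lam (A y)) \<longlongrightarrow> 0) F"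
proof (rule tendstoI)
  fix e :: real
  assume "0 < e"
  then obtain M where M: "lam ^ M < e * (1 - lam)"
    using real_arch_pow_inv[of "e * (1 - lam)" lam] lam by auto
  have "eventually (\<lambda>y. \<forall>n\<in>{..<M}. n \<notin> A y) F"
    by (rule eventually_ball_finite) (use assms in auto)
  then show "eventually (\<lambda>y. dist (geom_weight lam (A y)) 0 < e) F"
  proof (rule eventually_mono)
    fix y
    assume "\<forall>n\<in>{..<M}. n \<notin> A y"
    then have "geom_weight lam (A y) \<le> geom_weight lam {M..}"
      by (intro geom_weight_mono) (auto simp: not_less[symmetric])
    also have "\<dots> < e"
      using M lam by (simp add: geom_weight_atLeast field_simps)
    finally show "dist (geom_weight lam (A y)) 0 < e"
      using geom_weight_nonneg by simp
  qed
qed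

context
  fixes \<xi> :: "nat \<Rightarrow> real"
begin

lemma wc_phi_eq: "wc_phi lam \<xi> x = x + geom_weight lam {n. 1 \<le> n \<and> \<xi> n < x}"
  by (simp add: wc_phi_def geom_weight_def)

lemma wc_phi_split:
  assumes "x \<le> y"
  shows "wc_phi lam \<xi> y
    = wc_phi lam \<xi> x + (y - x) + geom_weight lam {n. 1 \<le> n \<and> x \<le> \<xi> n \<and> \<xi> n < y}"
proof -
  have "{n. 1 \<le> n \<and> \<xi> n < y}
      = {n. 1 \<le> n \<and> \<xi> n < x} \<union> {n. 1 \<le> n \<and> x \<le> \<xi> n \<and> \<xi> n < y}"
    using assms by auto
  moreover have "{n. 1 \<le> n \<and> \<xi> n < x} \<inter> {n. 1 \<le> n \<and> x \<le> \<xi> n \<and> \<xi> n < y} = {}"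
    by auto
  ultimately show ?thesis
    by (simp add: wc_phi_eq geom_weight_Un_disjoint)
qed

lemma strict_mono_wc_phi: "strict_mono (wc_phi lam \<xi>)"
proof (rule strict_monoI)
  fix x y :: real
  assume "x < y"
  then show "wc_phi lam \<xi> x < wc_phi lam \<xi> y"
    using wc_phi_split[of x y] geom_weight_nonneg[of "{n. 1 \<le> n \<and> x \<le> \<xi> n \<and> \<xi> n < y}"]
    by simp
qed

lemma tendsto_wc_phi_at_left: "(wc_phi lam \<xi> \<longlongrightarrow> wc_phi lam \<xi> x) (at_left x)"
proof -
  define D where "D y = geom_weight lam {n. 1 \<le> n \<and> y \<le> \<xi> n \<and> \<xi> n < x}" for y
  have "(D \<longlongrightarrow> 0) (at_left x)"
    unfolding D_def
  proof (rule tendsto_geom_weight_zero)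
    fix n
    show "eventually (\<lambda>y. n \<notin> {n. 1 \<le> n \<and> y \<le> \<xi> n \<and> \<xi> n < x}) (at_left x)"
      by (cases "\<xi> n < x") (auto elim: eventually_mono[OF eventually_at_left_real])
  qed
  then have "((\<lambda>y. wc_phi lam \<xi> x - (x - y) - D y) \<longlongrightarrow> wc_phi lam \<xi> x - (x - x) - 0) (at_left x)"
    by (intro tendsto_intros)
  moreover have "eventually (\<lambda>y. wc_phi lam \<xi> x - (x - y) - D y = wc_phi lam \<xi> y) (at_left x)"
  proof (rule eventually_mono[OF eventually_at_left_real[of "x - 1" x]])
    fix y
    assume "y \<in> {x - 1<..<x}"
    then show "wc_phi lam \<xi> x - (x - y) - D y = wc_phi lam \<xi> y"
      using wc_phi_split[of y x] by (simp add: D_def)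
  qed simp
  ultimately show ?thesis
    by (auto intro: Lim_transform_eventually)
qed

lemma tendsto_wc_phi_at_right:
  "(wc_phi lam \<xi> \<longlongrightarrow> wc_phi lam \<xi> x + geom_weight lam {n. 1 \<le> n \<and> \<xi> n = x}) (at_right x)"
proof -
  define J where "J = geom_weight lam {n. 1 \<le> n \<and> \<xi> n = x}"
  define D where "D y = geom_weight lam {n. 1 \<le> n \<and> x < \<xi> n \<and> \<xi> n < y}" for y
  have "(D \<longlongrightarrow> 0) (at_right x)"
    unfolding D_def
  proof (rule tendsto_geom_weight_zero)
    fix n
    show "eventually (\<lambda>y. n \<notin> {n. 1 \<le> n \<and> x < \<xi> n \<and> \<xi> n < y}) (at_right x)"
      by (cases "x < \<xi> n") (auto elim: eventually_mono[OF eventually_at_right_real])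
  qed
  then have "((\<lambda>y. wc_phi lam \<xi> x + (y - x) + J + D y) \<longlongrightarrow> wc_phi lam \<xi> x + (x - x) + J + 0)
      (at_right x)"
    by (intro tendsto_intros)
  moreover have phi_right_eq: "wc_phi lam \<xi> y = wc_phi lam \<xi> x + (y - x) + J + D y" if "x < y" for y
  proof -
    have "{n. 1 \<le> n \<and> x \<le> \<xi> n \<and> \<xi> n < y}
        = {n. 1 \<le> n \<and> \<xi> n = x} \<union> {n. 1 \<le> n \<and> x < \<xi> n \<and> \<xi> n < y}"
      using that by auto
    then have "geom_weight lam {n. 1 \<le> n \<and> x \<le> \<xi> n \<and> \<xi> n < y} = J + D y"
      unfolding J_def D_def by (simp only:) (rule geom_weight_Un_disjoint, auto)
    then show ?thesis
      using wc_phi_split[of x y] that by simp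
  qed
  moreover have "eventually (\<lambda>y. wc_phi lam \<xi> x + (y - x) + J + D y = wc_phi lam \<xi> y) (at_right x)"
    by (rule eventually_mono[OF eventually_at_right_real[of x "x + 1"]]) (use phi_right_eq in auto)
  ultimately show ?thesis
    unfolding J_def by (auto intro: Lim_transform_eventually)
qed

end

end

lemma strict_mono_right_limit_less:
  fixes g :: "real \<Rightarrow> real"
  assumes "strict_mono g" "(g \<longlongrightarrow> l) (at_right x)" "x < y"
  shows "l < g y"
proof -
  define z where "z = (x + y) / 2"
  have "x < z" "z < y"
    using assms(3) by (simp_all add: z_def)
  have "eventually (\<lambda>w. g w \<le> g z) (at_right x)"
    by (rule eventually_mono[OF eventually_at_right_real[OF \<open>x < z\<close>]])
      (auto intro: strict_mono_less_eq[THEN iffD2, OF assms(1)])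
  then have "l \<le> g z"
    by (rule tendsto_upperbound[OF assms(2)]) simp
  also have "g z < g y"
    using assms(1) \<open>z < y\<close> by (rule strict_monoD)
  finally show ?thesis .
qed

lemma mono_attains_off_jumps:
  fixes g J :: "real \<Rightarrow> real"
  assumes "mono g" and left: "\<And>x. (g \<longlongrightarrow> g x) (at_left x)"
    and right: "\<And>x. (g \<longlongrightarrow> g x + J x) (at_right x)"
    and "a \<le> b" "g a \<le> v" "v \<le> g b" and off_jumps: "\<And>x. v \<notin> {g x<..g x + J x}"
  shows "v \<in> g ` {a..b}"
proof -
  txt \<open>The point is \<open>s = sup {x. g x \<le> v}\<close>: left-continuity gives \<open>g s \<le> v\<close>, and the right
    limit at \<open>s\<close> gives \<open>v \<le> g s + J s\<close>, which together with \<open>v \<notin> (g s, g s + J s]\<close> forces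
    \<open>v \<le> g s\<close>.\<close>
  define T where "T = {x \<in> {a..b}. g x \<le> v}"
  define s where "s = Sup T"
  have "a \<in> T"
    using assms by (simp add: T_def)
  have "bdd_above T"
    unfolding T_def by (rule bdd_aboveI[of _ b]) auto
  then have upper: "x \<le> s" if "x \<in> T" for x
    unfolding s_def using that by (rule cSup_upper[rotated])
  have "s \<in> {a..b}"
    using upper[OF \<open>a \<in> T\<close>] \<open>a \<in> T\<close> by (auto simp: s_def T_def intro!: cSup_least)
  have "g s \<le> v"
  proof (rule ccontr)
    assume "\<not> g s \<le> v"
    then have "a < s"
      using \<open>g a \<le> v\<close> \<open>s \<in> {a..b}\<close> by (cases "a = s") auto
    have "eventually (\<lambda>y. v < g y \<and> y \<in> {a<..<s}) (at_left s)"
      using order_tendstoD(1)[OF left] \<open>\<not> g s \<le> v\<close> eventually_at_left_real[OF \<open>a < s\<close>]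
      by (auto intro: eventually_conj)
    then obtain y where "v < g y" "y < s"
      using eventually_happens'[OF trivial_limit_at_left_real] by fastforce
    then obtain t where "t \<in> T" "y < t"
      using less_cSup_iff[of T y] \<open>a \<in> T\<close> \<open>bdd_above T\<close> by (auto simp: s_def)
    then show False
      using \<open>v < g y\<close> monoD[OF \<open>mono g\<close>, of y t] by (auto simp: T_def)
  qed
  moreover have "v \<le> g s"
  proof (rule ccontr)
    assume "\<not> v \<le> g s"
    then have "s < b"
      using \<open>s \<in> {a..b}\<close> \<open>v \<le> g b\<close> by (cases "s = b") auto
    have "eventually (\<lambda>y. v \<le> g y) (at_right s)"
      using eventually_at_right_real[OF \<open>s < b\<close>]
    proof (rule eventually_mono)
      fix y
      assume "y \<in> {s<..<b}"
      moreover from this have "y \<notin> T"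
        using upper by force
      ultimately show "v \<le> g y"
        using \<open>s \<in> {a..b}\<close> by (auto simp: T_def)
    qed
    then have "v \<le> g s + J s"
      using tendsto_lowerbound[OF right] by simp
    with \<open>\<not> v \<le> g s\<close> off_jumps[of s] show False
      by simp
  qed
  ultimately show ?thesis
    using \<open>s \<in> {a..b}\<close> by (intro image_eqI[of _ _ s]) auto
qed

lemma strict_mono_image_Icc_eq:
  fixes g J :: "real \<Rightarrow> real"
  assumes "strict_mono g" and left: "\<And>x. (g \<longlongrightarrow> g x) (at_left x)"
    and right: "\<And>x. (g \<longlongrightarrow> g x + J x) (at_right x)" and "a \<le> b"
  shows "g ` {a..b} = {g a..g b} - (\<Union>x. {g x<..g x + J x})"
proof
  have "mono g"
    using assms(1) by (rule strict_mono_mono)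
  show "g ` {a..b} \<subseteq> {g a..g b} - (\<Union>x. {g x<..g x + J x})"
  proof
    fix v
    assume "v \<in> g ` {a..b}"
    then obtain y where y: "y \<in> {a..b}" "v = g y"
      by auto
    have "v \<notin> {g x<..g x + J x}" for x
    proof (cases "x < y")
      case True
      have "g x + J x < g y"
        using assms(1) right True by (rule strict_mono_right_limit_less)
      then show ?thesis
        using y by auto
    next
      case False
      then show ?thesis
        using monoD[OF \<open>mono g\<close>, of y x] y by auto
    qed
    moreover have "v \<in> {g a..g b}"
      using y monoD[OF \<open>mono g\<close>] by auto
    ultimately show "v \<in> {g a..g b} - (\<Union>x. {g x<..g x + J x})"
      by auto
  qed
  show "{g a..g b} - (\<Union>x. {g x<..g x + J x}) \<subseteq> g ` {a..b}"
    using mono_attains_off_jumps[OF \<open>mono g\<close> left right \<open>a \<le> b\<close>] by auto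
qed

lemma strict_mono_jump_closures_disjoint:
  fixes g J :: "real \<Rightarrow> real"
  assumes "strict_mono g" and right: "\<And>x. (g \<longlongrightarrow> g x + J x) (at_right x)" and "x \<noteq> y"
  shows "closure {g x<..g x + J x} \<inter> closure {g y<..g y + J y} = {}"
proof -
  have closure_sub: "closure {a<..b} \<subseteq> {a..b}" for a b :: real
    by (rule closure_minimal) auto
  have "closure {g x<..g x + J x} \<inter> closure {g y<..g y + J y} = {}" if "x < y" for x y
  proof -
    have "g x + J x < g y"
      using assms(1) right that by (rule strict_mono_right_limit_less)
    then show ?thesis
      using closure_sub[of "g x"] closure_sub[of "g y"] by fastforce
  qed
  then show ?thesis
    using \<open>x \<noteq> y\<close> by (metis Int_commute linorder_neqE)
qed

lemma UN_jumps_supported_on_range: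
  fixes g J :: "real \<Rightarrow> real"
  assumes "\<And>x. x \<notin> \<xi> ` A \<Longrightarrow> J x = 0"
  shows "(\<Union>x. {g x<..g x + J x}) = (\<Union>r\<in>A. {g (\<xi> r)<..g (\<xi> r) + J (\<xi> r)})"
proof (intro equalityI subsetI)
  fix z
  assume "z \<in> (\<Union>x. {g x<..g x + J x})"
  then obtain x where z: "z \<in> {g x<..g x + J x}"
    by blast
  then have "x \<in> \<xi> ` A"
    using assms[of x] by (cases "x \<in> \<xi> ` A") auto
  then show "z \<in> (\<Union>r\<in>A. {g (\<xi> r)<..g (\<xi> r) + J (\<xi> r)})"
    using z by blast
qed blast

lemma continuous_within_Icc_if_tendsto_at_left:
  fixes g :: "real \<Rightarrow> real"
  assumes "(g \<longlongrightarrow> g x) (at_left x)"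
  shows "continuous (at x within {a..x}) g"
proof (cases "a < x")
  case True
  then show ?thesis
    using assms by (simp add: continuous_within at_within_Icc_at_left)
next
  case False
  then have "finite {a..x}"
    by (simp add: finite_subset[of _ "{x}"] subset_eq)
  then have "at x within {a..x} = bot"
    using islimpt_finite trivial_limit_within by blast
  then show ?thesis
    by (simp add: continuous_within)
qed

lemma continuous_within_if_tendsto_at_left_right:
  fixes g :: "real \<Rightarrow> real"
  assumes "(g \<longlongrightarrow> g x) (at_left x)" "(g \<longlongrightarrow> g x) (at_right x)"
  shows "continuous (at x within S) g"
  unfolding continuous_within using filterlim_split_at[OF assms] by (rule tendsto_within_subset) simp

lemma finite_uniform_radius:
  assumes "finite V" "\<And>v. v \<in> V \<Longrightarrow> \<exists>\<delta>>0. \<forall>z. \<bar>z - v\<bar> < \<delta> \<longrightarrow> Q v z"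
  shows "\<exists>\<delta>::real>0. \<forall>v\<in>V. \<forall>z. \<bar>z - v\<bar> < \<delta> \<longrightarrow> Q v z"
  using assms
proof (induction V rule: finite_induct)
  case (insert a V)
  then obtain d1 d2 :: real where "d1 > 0" "\<forall>v\<in>V. \<forall>z. \<bar>z - v\<bar> < d1 \<longrightarrow> Q v z"
    and "d2 > 0" "\<forall>z. \<bar>z - a\<bar> < d2 \<longrightarrow> Q a z"
    by blast
  then show ?case
    by (intro exI[of _ "min d1 d2"]) auto
qed (auto intro: exI[of _ 1])

lemma orbit_finite_range_if_not_inj:
  assumes orbit: "\<And>n. \<xi> (Suc n) = f (\<xi> n)" and "\<not> inj \<xi>"
  shows "finite (range \<xi>)"
proof -
  obtain p q where "p < q" "\<xi> p = \<xi> q"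
    using \<open>\<not> inj \<xi>\<close> unfolding inj_def by (metis linorder_neqE_nat)
  have periodic: "\<xi> (m + q) = \<xi> (m + p)" for m
    by (induction m) (simp_all add: \<open>\<xi> p = \<xi> q\<close> orbit)
  have "\<xi> n \<in> \<xi> ` {..<q}" for n
  proof (induction n rule: less_induct)
    case (less n)
    show ?case
    proof (cases "n < q")
      case False
      then have "\<xi> n = \<xi> (n - q + p)" and "n - q + p < n"
        using periodic[of "n - q"] \<open>p < q\<close> by simp_all
      then show ?thesis
        using less by simp
    qed simp
  qed
  then have "range \<xi> \<subseteq> \<xi> ` {..<q}"
    by blast
  then show ?thesis
    using finite_subset by blast
qed

lemma orbit_shadowing:
  fixes \<xi> :: "nat \<Rightarrow> real"
  assumes orbit: "\<And>n. \<xi> (Suc n) = f (\<xi> n)" and "0 \<le> lam" "lam \<le> 1"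
    and affine: "\<And>n z. \<bar>z - \<xi> n\<bar> < \<delta> \<Longrightarrow> f z = f (\<xi> n) + lam * (z - \<xi> n)"
    and start: "\<bar>z - \<xi> 0\<bar> < \<delta>"
  shows "\<bar>(f ^^ j) z - \<xi> j\<bar> = lam ^ j * \<bar>z - \<xi> 0\<bar>"
proof (induction j)
  case (Suc j)
  have "lam ^ j * \<bar>z - \<xi> 0\<bar> \<le> \<bar>z - \<xi> 0\<bar>"
    by (rule mult_left_le_one_le) (use assms(2,3) in \<open>simp_all add: power_le_one\<close>)
  then have "\<bar>(f ^^ j) z - \<xi> j\<bar> < \<delta>"
    using Suc start by simp
  then have "f ((f ^^ j) z) - f (\<xi> j) = lam * ((f ^^ j) z - \<xi> j)"
    using affine by simp
  then show ?case
    using Suc orbit assms(2) by (simp add: abs_mult)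
qed simp

lemma orbit_approaches_shadowed_range:
  fixes \<xi> :: "nat \<Rightarrow> real"
  assumes orbit: "\<And>n. \<xi> (Suc n) = f (\<xi> n)" and lam: "0 \<le> lam" "lam < 1" and "\<delta> > 0"
    and affine: "\<And>n z. \<bar>z - \<xi> n\<bar> < \<delta> \<Longrightarrow> f z = f (\<xi> n) + lam * (z - \<xi> n)"
    and start: "\<bar>(f ^^ t0) y - \<xi> 0\<bar> < \<delta>" and "e > 0"
  shows "eventually (\<lambda>n. \<exists>v\<in>range \<xi>. dist ((f ^^ n) y) v < e) sequentially"
proof -
  obtain J where J: "lam ^ J < e / \<delta>"
    using real_arch_pow_inv[of "e / \<delta>" lam] \<open>e > 0\<close> \<open>\<delta> > 0\<close> lam by auto
  have "dist ((f ^^ n) y) (\<xi> (n - t0)) < e" if "n \<ge> J + t0" for n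
  proof -
    have "n = (n - t0) + t0"
      using that by simp
    then have "(f ^^ n) y = (f ^^ (n - t0)) ((f ^^ t0) y)"
      by (metis funpow_add o_apply)
    then have "dist ((f ^^ n) y) (\<xi> (n - t0)) = lam ^ (n - t0) * \<bar>(f ^^ t0) y - \<xi> 0\<bar>"
      using orbit_shadowing[OF orbit _ _ affine start] lam by (simp add: dist_real_def)
    also have "\<dots> \<le> lam ^ J * \<delta>"
      by (intro mult_mono power_decreasing) (use that start lam in auto)
    also have "\<dots> < e"
      using J \<open>\<delta> > 0\<close> by (simp add: field_simps)
    finally show ?thesis .
  qed
  then show ?thesis
    by (intro eventually_sequentiallyI[of "J + t0"]) blast
qed

lemma perfect_set_empty_if_sequence_approaches_finite:
  fixes u :: "nat \<Rightarrow> 'a::metric_space"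
  assumes perfect: "\<And>x. x \<in> L \<Longrightarrow> x islimpt L" and "L \<subseteq> closure (range u)"
    and "finite V" and approach: "\<And>e. e > 0 \<Longrightarrow> eventually (\<lambda>n. \<exists>v\<in>V. dist (u n) v < e) sequentially"
  shows "L = {}"
proof -
  have "q \<in> V" if "q \<in> L" for q
  proof (rule ccontr)
    assume "q \<notin> V"
    obtain d where "d > 0" and far: "\<forall>v\<in>V. v \<noteq> q \<longrightarrow> d \<le> dist q v"
      using finite_set_avoid[OF \<open>finite V\<close>, of q] by blast
    then have "d / 2 > 0"
      by simp
    then obtain M where M: "\<forall>n\<ge>M. \<exists>v\<in>V. dist (u n) v < d / 2"
      using approach unfolding eventually_sequentially by blast
    have not_limpt_tail: "\<not> q islimpt u ` {M..}"
    proof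
      assume "q islimpt u ` {M..}"
      then have "\<exists>x'\<in>u ` {M..}. x' \<noteq> q \<and> dist x' q < d / 2"
        using \<open>d / 2 > 0\<close> unfolding islimpt_approachable by blast
      then obtain n where "n \<ge> M" "dist (u n) q < d / 2"
        by auto
      moreover obtain v where "v \<in> V" "dist (u n) v < d / 2"
        using M \<open>n \<ge> M\<close> by blast
      moreover have "d \<le> dist q v"
        using far \<open>v \<in> V\<close> \<open>q \<notin> V\<close> by auto
      ultimately show False
        using dist_triangle3[of q v "u n"] by linarith
    qed
    have "q islimpt closure (range u)"
      using perfect[OF that] assms(2) by (rule islimpt_subset)
    moreover have "range u = u ` {..<M} \<union> u ` {M..}"
      unfolding image_Un[symmetric] by (rule arg_cong[where f = "image u"]) auto
    ultimately have "q islimpt u ` {..<M} \<or> q islimpt u ` {M..}"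
      by (simp add: limpt_of_closure islimpt_Un)
    then show False
      using not_limpt_tail islimpt_finite[of "u ` {..<M}"] by auto
  qed
  then have "L \<subseteq> V"
    by blast
  then have "finite L"
    using \<open>finite V\<close> by (rule finite_subset)
  then show ?thesis
    using perfect islimpt_finite[OF \<open>finite L\<close>] by blast
qed

lemma P1_locally_affine:
  assumes "P1 N c f lam" and x: "x \<in> {c 0<..<c N} - Delta N c"
  shows "\<exists>\<delta>>0. \<forall>z. \<bar>z - x\<bar> < \<delta> \<longrightarrow> f z = f x + lam * (z - x)"
proof -
  define i where "i = (LEAST k. x < c k)"
  have "x < c i" "i \<le> N"
    using x unfolding i_def by (auto intro: LeastI Least_le)
  moreover have "i \<noteq> 0"
    using \<open>x < c i\<close> x by (cases i) auto
  moreover have "x \<noteq> c (i - 1)"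
  proof (cases "i = 1")
    case False
    then have "c (i - 1) \<in> Delta N c"
      using \<open>i \<le> N\<close> \<open>i \<noteq> 0\<close> unfolding Delta_def by (intro imageI) auto
    then show ?thesis
      using x by auto
  qed (use x in auto)
  ultimately have "c (i - 1) < x"
    using not_less_Least[of "i - 1" "\<lambda>k. x < c k"] by (simp add: i_def)
  have "i \<in> {1..N}"
    using \<open>i \<le> N\<close> \<open>i \<noteq> 0\<close> by simp
  then obtain b where b: "\<forall>y\<in>Xi N c i. f y = lam * y + b"
    using assms(1) unfolding P1_def by blast
  have window: "{c (i - 1)<..<c i} \<subseteq> Xi N c i"
    unfolding Xi_def by auto
  show ?thesis
  proof (intro exI conjI allI impI)
    show "0 < min (x - c (i - 1)) (c i - x)"
      using \<open>c (i - 1) < x\<close> \<open>x < c i\<close> by simp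
    fix z
    assume "\<bar>z - x\<bar> < min (x - c (i - 1)) (c i - x)"
    then have "z \<in> Xi N c i" "x \<in> Xi N c i"
      using window \<open>c (i - 1) < x\<close> \<open>x < c i\<close> by (auto simp: abs_less_iff)
    then show "f z = f x + lam * (z - x)"
      using b by (simp add: algebra_simps)
  qed
qed

lemma well_cutting_orbit:
  assumes "well_cutting N c f \<xi>"
  shows "\<xi> (Suc n) = f (\<xi> n)"
proof -
  have "\<And>r. \<xi> r = (f ^^ r) (\<xi> 0)"
    using assms unfolding well_cutting_def by blast
  from this[of "Suc n"] this[of n] show ?thesis
    by simp
qed

lemma well_cutting_interior:
  assumes "well_cutting N c f \<xi>"
  shows "\<xi> r \<in> {c 0<..<c N} - Delta N c"
proof -
  have "\<xi> 0 \<in> Xtilde N c f" "\<xi> r = (f ^^ r) (\<xi> 0)"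
    and not_ends: "\<xi> r \<notin> fwd_orbit f (c 0)" "\<xi> r \<notin> fwd_orbit f (c N)"
    using assms unfolding well_cutting_def by blast+
  then have "\<xi> r \<in> XX c N - Delta N c"
    unfolding Xtilde_def by auto
  moreover have "\<xi> r \<noteq> c 0" "\<xi> r \<noteq> c N"
    using not_ends unfolding fwd_orbit_def by (metis funpow_0 rangeI)+
  ultimately show ?thesis
    by (auto simp: XX_def)
qed

lemma well_cutting_inj:
  assumes "P1 N c f lam" "P3 N c f" "P5 N c f" and wc: "well_cutting N c f \<xi>"
  shows "inj \<xi>"
proof (rule ccontr)
  assume "\<not> inj \<xi>"
  have lam: "0 < lam" "lam < 1"
    using assms(1) by (simp_all add: P1_def)
  note orbit = well_cutting_orbit[OF wc]
  have "finite (range \<xi>)"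
    using orbit \<open>\<not> inj \<xi>\<close> by (rule orbit_finite_range_if_not_inj)
  moreover have "\<exists>\<delta>>0. \<forall>z. \<bar>z - v\<bar> < \<delta> \<longrightarrow> f z = f v + lam * (z - v)"
    if "v \<in> range \<xi>" for v
    using that P1_locally_affine[OF assms(1) well_cutting_interior[OF wc]] by blast
  ultimately obtain \<delta> :: real where "\<delta> > 0"
    and affine_range: "\<forall>v\<in>range \<xi>. \<forall>z. \<bar>z - v\<bar> < \<delta> \<longrightarrow> f z = f v + lam * (z - v)"
    using finite_uniform_radius[of "range \<xi>" "\<lambda>v z. f z = f v + lam * (z - v)"] by blast
  have affine: "\<And>n z. \<bar>z - \<xi> n\<bar> < \<delta> \<Longrightarrow> f z = f (\<xi> n) + lam * (z - \<xi> n)"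
    using affine_range by blast
  define L where "L = attractor N c f"
  have "L \<noteq> {}" and perfect: "\<And>x. x \<in> L \<Longrightarrow> x islimpt L"
    using assms(2) unfolding P3_def cantor_set_def L_def by blast+
  obtain y where dense: "L \<subseteq> closure (range (\<lambda>n. (f ^^ n) y))"
    using assms(3) unfolding P5_def L_def by blast
  have "\<xi> 0 \<in> L"
    using wc unfolding well_cutting_def L_def by blast
  then have "\<xi> 0 \<in> closure (range (\<lambda>n. (f ^^ n) y))"
    using dense by blast
  then obtain t0 where "dist ((f ^^ t0) y) (\<xi> 0) < \<delta>"
    using \<open>\<delta> > 0\<close> unfolding closure_approachable by blast
  then have t0: "\<bar>(f ^^ t0) y - \<xi> 0\<bar> < \<delta>"
    by (simp add: dist_real_def)
  have approach: "eventually (\<lambda>n. \<exists>v\<in>range \<xi>. dist ((f ^^ n) y) v < e) sequentially"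
    if "e > 0" for e
    using orbit less_imp_le[OF lam(1)] lam(2) \<open>\<delta> > 0\<close> affine t0 that
    by (rule orbit_approaches_shadowed_range)
  have "L = {}"
    by (rule perfect_set_empty_if_sequence_approaches_finite[OF perfect dense \<open>finite (range \<xi>)\<close> approach])
  with \<open>L \<noteq> {}\<close> show False
    by simp
qed

theorem lemma8:
  fixes N :: nat and c :: "nat \<Rightarrow> real" and f :: "real \<Rightarrow> real" and lam :: real
    and \<xi> :: "nat \<Rightarrow> real"
  assumes "N \<ge> 2" and "strict_mono_on {0..N} c"
    and "f ` XX c N \<subseteq> XX c N"
    and "P1 N c f lam" and "P2 N c f" and "P3 N c f" and "P4 N c f" and "P5 N c f" and "P6 N c f"
    and "well_cutting N c f \<xi>"
  defines "\<phi> \<equiv> wc_phi lam \<xi>"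
    and "G \<equiv> (\<lambda>r. {wc_phi lam \<xi> (\<xi> r) <.. wc_phi lam \<xi> (\<xi> r) + lam ^ r})"
  shows "(strict_mono_on {c 0 .. c N} \<phi>)
    \<and> (\<forall>x\<in>{c 0 .. c N}. continuous (at x within {c 0 .. x}) \<phi>)
    \<and> (\<forall>x\<in>{c 0 .. c N} - {\<xi> r | r. r \<ge> 1}. continuous (at x within {c 0 .. c N}) \<phi>)
    \<and> (\<forall>r\<ge>1. (\<phi> \<longlongrightarrow> \<phi> (\<xi> r) + lam ^ r) (at (\<xi> r) within {\<xi> r <.. c N}))
    \<and> (\<phi> ` {c 0 .. c N} = {\<phi> (c 0) .. \<phi> (c N)} - (\<Union>r\<in>{1..}. G r))
    \<and> (\<forall>r l. 1 \<le> r \<longrightarrow> 1 \<le> l \<longrightarrow> r \<noteq> l \<longrightarrow> closure (G r) \<inter> closure (G l) = {})"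
proof -
  have "0 \<le> lam" "lam < 1"
    using assms(4) by (auto simp: P1_def)
  have inj: "inj \<xi>"
    using assms(4,6,8,10) by (rule well_cutting_inj)
  have "c 0 \<le> c N"
    using well_cutting_interior[OF assms(10), of 0] by auto
  define J where "J x = geom_weight lam {n. 1 \<le> n \<and> \<xi> n = x}" for x
  have J_orbit: "J (\<xi> r) = lam ^ r" if "1 \<le> r" for r
    unfolding J_def using inj that by (rule geom_weight_index_of_inj)
  have J_off_orbit: "J x = 0" if "x \<notin> \<xi> ` {1..}" for x
    unfolding J_def using that by (rule geom_weight_index_off_range)
  note phi_facts = strict_mono_wc_phi tendsto_wc_phi_at_left tendsto_wc_phi_at_right
  have mono: "strict_mono \<phi>" and left: "\<And>x. (\<phi> \<longlongrightarrow> \<phi> x) (at_left x)"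
    and right: "\<And>x. (\<phi> \<longlongrightarrow> \<phi> x + J x) (at_right x)"
    unfolding \<phi>_def J_def using phi_facts[OF \<open>0 \<le> lam\<close> \<open>lam < 1\<close>] by blast+
  have G_jump: "G r = {\<phi> (\<xi> r)<..\<phi> (\<xi> r) + J (\<xi> r)}" if "1 \<le> r" for r
    using J_orbit[OF that] by (simp add: G_def \<phi>_def)
  show ?thesis
  proof (intro conjI ballI allI impI)
    show "strict_mono_on {c 0..c N} \<phi>"
      using mono by (simp add: strict_mono_def strict_mono_on_def)
    show "continuous (at x within {c 0..x}) \<phi>" for x
      using left by (rule continuous_within_Icc_if_tendsto_at_left)
    show "continuous (at x within {c 0..c N}) \<phi>" if "x \<in> {c 0..c N} - {\<xi> r |r. r \<ge> 1}" for x
    proof -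
      have "x \<notin> \<xi> ` {1..}"
        using that by auto
      then show ?thesis
        using left right[of x] J_off_orbit[of x] by (intro continuous_within_if_tendsto_at_left_right) auto
    qed
    show "(\<phi> \<longlongrightarrow> \<phi> (\<xi> r) + lam ^ r) (at (\<xi> r) within {\<xi> r<..c N})" if "1 \<le> r" for r
      using right[of "\<xi> r"] J_orbit[OF that] by (auto intro: tendsto_within_subset)
    have "(\<Union>x. {\<phi> x<..\<phi> x + J x}) = (\<Union>r\<in>{1..}. G r)"
      using UN_jumps_supported_on_range[OF J_off_orbit] G_jump by simp
    then show "\<phi> ` {c 0..c N} = {\<phi> (c 0)..\<phi> (c N)} - (\<Union>r\<in>{1..}. G r)"
      using strict_mono_image_Icc_eq[OF mono left right \<open>c 0 \<le> c N\<close>] by simp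
    show "closure (G r) \<inter> closure (G l) = {}" if "1 \<le> r" "1 \<le> l" "r \<noteq> l" for r l
      using strict_mono_jump_closures_disjoint[OF mono right, of "\<xi> r" "\<xi> l"] that G_jump
      by (simp add: inj_eq[OF inj])
  qed
qed

end
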